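(* Let $m\ge2$, $G=CK(2m-1)$, and let $B$ be a blocker for the simple Hamiltonian paths of $G$ whose $m$ edges are parallel (or equal) to the boundary edges $[0,1],[1,2],\dots,[m-1,m]$, one edge per direction. Let $[\alpha,\alpha+1]$ and $[m-\delta-1,m-\delta]$ be, respectively, the first and the last edges of the path $\langle 0,1,\dots,m\rangle$ that belong to $B$ (so $0\le\alpha<\alpha+1\le m-\delta-1<m-\delta\le m$). Then $B$ misses at most one edge of the boundary path $\langle\alpha,\alpha+1,\dots,m-\delta\rangle$.
   Context: $CK(2m-1)$ is the complete convex geometric graph on $2m-1$ points in convex position, labelled clockwise $0,\dots,2m-2$ (elements of $\mathbb{Z}_{2m-1}$), with all segments as edges; boundary edges are $[i,i+1]$. The direction of $[i,j]$ is $i+j\pmod{2m-1}$ and edges are parallel if they have the same direction. A simple Hamiltonian path (SHP) is a path through all vertices whose edges pairwise do not cross; a blocker for SHPs is an edge set of smallest possible size meeting (sharing an edge with) every SHP. (Every blocker has size $m$ and contains at least two boundary edges.) *)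

theory Defs
  imports Main
begin

(* CK(n): vertices 0..n-1 in convex position, labelled clockwise.
   Edges are 2-element subsets {i,j} of {0..<n}. *)

definition ck_edges :: "nat \<Rightarrow> nat set set" where
  "ck_edges n = {{i, j} | i j. i < n \<and> j < n \<and> i \<noteq> j}"

definition strictly_between :: "nat \<Rightarrow> nat \<Rightarrow> nat \<Rightarrow> bool" where
  "strictly_between x y z \<longleftrightarrow> min x y < z \<and> z < max x y"

(* segments [a,b] and [c,d] between points in convex position cross
   iff they have no common endpoint and exactly one of c,d lies between a and b *)
definition seg_cross :: "nat \<Rightarrow> nat \<Rightarrow> nat \<Rightarrow> nat \<Rightarrow> bool" where
  "seg_cross a b c d \<longleftrightarrow>
     {a, b} \<inter> {c, d} = {} \<and> (strictly_between a b c \<noteq> strictly_between a b d)"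

definition path_edges :: "nat list \<Rightarrow> nat set set" where
  "path_edges p = {{p ! i, p ! Suc i} | i. Suc i < length p}"

definition is_SHP :: "nat \<Rightarrow> nat list \<Rightarrow> bool" where
  "is_SHP n p \<longleftrightarrow> distinct p \<and> set p = {0..<n} \<and>
     (\<forall>i j. Suc i < length p \<longrightarrow> Suc j < length p \<longrightarrow>
        \<not> seg_cross (p ! i) (p ! Suc i) (p ! j) (p ! Suc j))"

definition meets_all_SHP :: "nat \<Rightarrow> nat set set \<Rightarrow> bool" where
  "meets_all_SHP n B \<longleftrightarrow> (\<forall>p. is_SHP n p \<longrightarrow> B \<inter> path_edges p \<noteq> {})"

definition is_SHP_blocker :: "nat \<Rightarrow> nat set set \<Rightarrow> bool" where
  "is_SHP_blocker n B \<longleftrightarrow> B \<subseteq> ck_edges n \<and> meets_all_SHP n B \<and>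
     (\<forall>B'. B' \<subseteq> ck_edges n \<longrightarrow> meets_all_SHP n B' \<longrightarrow> card B \<le> card B')"

definition edge_dir :: "nat \<Rightarrow> nat set \<Rightarrow> nat" where
  "edge_dir n e = (\<Sum>x\<in>e. x) mod n"

end

theory Submission
  imports Defs
begin

(*
  Suppose two boundary edges [j, j+1] and [k, k+1] with \<alpha> < j < k < \<beta> = m - \<delta> - 1 avoid B;
  we build a simple Hamiltonian path avoiding B. Call "chain" the vertices outside \<alpha>+1..\<beta>, listed
  counterclockwise from \<alpha> (\<alpha>, ..., 0, n-1, ..., \<beta>+1), and "side" the vertices \<alpha>+1, ..., \<beta>.
  The path starts at \<alpha> and always steps to the next unused vertex of the chain or of the side. Its
  vertex set stays a cyclic arc with the path ending at an end of it, so a new edge never crosses an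
  old one. Chain edges avoid B: they lie before \<alpha>, after \<beta>, or have even nonzero direction.
  The diagonal from side vertex x to chain vertex number x - d has direction \<alpha> + d mod n. As B has
  exactly one edge of each direction 2i+1 mod n, i.e. of direction 0 and of each odd residue, at most
  every other offset d is blocked, each by a single diagonal. Zigzagging between chain and side uses
  two consecutive offsets, and passing a free boundary edge shifts them by one; a maximality argument
  over the offsets finds a D for which the diagonals of offsets D-1, D, D+1, D+2 needed before j,
  before k, after j and after k are all free.
*)

section \<open>Non-crossing paths along cyclic arcs\<close>

lemma seg_cross_commute: "seg_cross a b c d \<longleftrightarrow> seg_cross c d a b"
  unfolding seg_cross_def strictly_between_def by (auto simp: min_def max_def)

definition noncrossing :: "nat list \<Rightarrow> bool" where
  "noncrossing p \<longleftrightarrow> (\<forall>s t. Suc s < length p \<longrightarrow> Suc t < length p \<longrightarrow>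
      \<not> seg_cross (p ! s) (p ! Suc s) (p ! t) (p ! Suc t))"

lemma is_SHP_iff: "is_SHP n p \<longleftrightarrow> distinct p \<and> set p = {0..<n} \<and> noncrossing p"
  unfolding is_SHP_def noncrossing_def by blast

lemma path_edges_snoc:
  assumes "p \<noteq> []"
  shows "path_edges (p @ [v]) = insert {last p, v} (path_edges p)"
proof -
  have edges: "path_edges q = (\<lambda>i. {q ! i, q ! Suc i}) ` {i. Suc i < length q}" for q :: "nat list"
    unfolding path_edges_def by auto
  have "{i. Suc i < length (p @ [v])} = insert (length p - 1) {i. Suc i < length p}"
    using assms by auto
  moreover have "{(p @ [v]) ! (length p - 1), (p @ [v]) ! Suc (length p - 1)} = {last p, v}"
    using assms by (simp add: nth_append last_conv_nth)
  moreover have "(\<lambda>i. {(p @ [v]) ! i, (p @ [v]) ! Suc i}) ` {i. Suc i < length p} = path_edges p"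
    unfolding edges by (auto simp: nth_append)
  ultimately show ?thesis
    by (simp add: edges[of "p @ [v]"])
qed

lemma noncrossing_snoc:
  assumes nc: "noncrossing p" and "p \<noteq> []"
    and new: "\<And>x y. x \<in> set p \<Longrightarrow> y \<in> set p \<Longrightarrow> \<not> seg_cross (last p) v x y"
  shows "noncrossing (p @ [v])"
  unfolding noncrossing_def
proof (intro allI impI)
  have seg: "Suc s < length p \<and> (p @ [v]) ! s = p ! s \<and> (p @ [v]) ! Suc s = p ! Suc s
      \<or> (p @ [v]) ! s = last p \<and> (p @ [v]) ! Suc s = v" if "Suc s < length (p @ [v])" for s
  proof (cases "Suc s < length p")
    case True
    then show ?thesis by (simp add: nth_append)
  next
    case False
    with that have "s = length p - 1" by simp
    with \<open>p \<noteq> []\<close> show ?thesis by (simp add: nth_append last_conv_nth)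
  qed
  have self: "\<not> seg_cross a b a b" for a b
    unfolding seg_cross_def by auto
  fix s t
  assume "Suc s < length (p @ [v])" "Suc t < length (p @ [v])"
  with seg[of s] seg[of t] nc new[of "p ! s" "p ! Suc s"] new[of "p ! t" "p ! Suc t"]
  show "\<not> seg_cross ((p @ [v]) ! s) ((p @ [v]) ! Suc s) ((p @ [v]) ! t) ((p @ [v]) ! Suc t)"
    unfolding noncrossing_def by (auto simp: self seg_cross_commute)
qed

definition cyc_arc :: "nat \<Rightarrow> nat \<Rightarrow> nat \<Rightarrow> nat set" where
  "cyc_arc n x l = (\<lambda>s. (x + s) mod n) ` {..<l}"

lemma mod_add_left_cancel_less:
  fixes n x s s' :: nat
  assumes "(x + s) mod n = (x + s') mod n" "s < n" "s' < n"
  shows "s = s'"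
proof -
  have "int n dvd (int x + int s) - (int x + int s')"
    using assms(1) by (metis mod_eq_dvd_iff of_nat_add of_nat_mod)
  then have "int n dvd int s - int s'" by simp
  show ?thesis
  proof (rule ccontr)
    assume "s \<noteq> s'"
    then have "int s - int s' \<noteq> 0" by simp
    from dvd_imp_le_int[OF this \<open>int n dvd int s - int s'\<close>] assms(2,3) show False
      by linarith
  qed
qed

lemma cyc_arc_Suc: "cyc_arc n x (Suc l) = insert ((x + l) mod n) (cyc_arc n x l)"
  unfolding cyc_arc_def by (simp add: lessThan_Suc)

lemma cyc_arc_Suc_back:
  assumes "0 < n"
  shows "cyc_arc n ((x + (n - 1)) mod n) (Suc l) = insert ((x + (n - 1)) mod n) (cyc_arc n x l)"
proof -
  define y where "y = (x + (n - 1)) mod n"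
  have "(y + Suc s) mod n = (x + s) mod n" for s
  proof -
    have "(y + Suc s) mod n = (x + (n - 1) + Suc s) mod n"
      unfolding y_def by (rule mod_add_left_eq)
    also have "x + (n - 1) + Suc s = x + s + n"
      using assms by simp
    finally show ?thesis by simp
  qed
  then have "(\<lambda>s. (y + s) mod n) ` Suc ` {..<l} = cyc_arc n x l"
    unfolding cyc_arc_def image_image by simp
  moreover have "y mod n = y"
    unfolding y_def by simp
  ultimately show ?thesis
    unfolding y_def[symmetric] by (simp add: cyc_arc_def lessThan_Suc_eq_insert_0)
qed

lemma cyc_arc_full:
  assumes "0 < n"
  shows "cyc_arc n x n = {0..<n}"
proof (rule card_subset_eq)
  show "cyc_arc n x n \<subseteq> {0..<n}"
    using assms unfolding cyc_arc_def by auto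
  have "inj_on (\<lambda>s. (x + s) mod n) {..<n}"
    by (auto intro: inj_onI mod_add_left_cancel_less)
  then show "card (cyc_arc n x n) = card {0..<n}"
    unfolding cyc_arc_def by (simp add: card_image)
qed simp

lemma strictly_between_Suc_mod:
  assumes "c < n" "v < n" "z < n" "z \<notin> {c, v}" "Suc z mod n \<notin> {c, v}"
  shows "strictly_between c v (Suc z mod n) \<longleftrightarrow> strictly_between c v z"
proof (cases "Suc z < n")
  case True
  with assms show ?thesis unfolding strictly_between_def by auto
next
  case False
  with assms have "Suc z = n" by simp
  with assms show ?thesis unfolding strictly_between_def by auto
qed

lemma strictly_between_cyc_arc:
  assumes "c < n" "v < n" "cyc_arc n x l \<inter> {c, v} = {}"
    and "z \<in> cyc_arc n x l" "z' \<in> cyc_arc n x l"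
  shows "strictly_between c v z \<longleftrightarrow> strictly_between c v z'"
proof -
  have "strictly_between c v ((x + s) mod n) \<longleftrightarrow> strictly_between c v (x mod n)" if "s < l" for s
    using that
  proof (induction s)
    case (Suc s)
    have "(x + s) mod n \<in> cyc_arc n x l" "(x + Suc s) mod n \<in> cyc_arc n x l"
      using Suc.prems unfolding cyc_arc_def by (auto intro!: image_eqI)
    then have "(x + s) mod n \<notin> {c, v}" "Suc ((x + s) mod n) mod n \<notin> {c, v}"
      using assms(3) by (auto simp: mod_Suc_eq)
    with assms(1) have "strictly_between c v (Suc ((x + s) mod n) mod n)
        \<longleftrightarrow> strictly_between c v ((x + s) mod n)"
      by (intro strictly_between_Suc_mod[OF assms(1,2)]) simp_all
    with Suc show ?case
      by (simp add: mod_Suc_eq)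
  qed simp
  with assms(4,5) show ?thesis
    unfolding cyc_arc_def by auto
qed

lemma mod_add_notin_cyc_arc:
  assumes "s < n" "a + l \<le> n" "s < a \<or> a + l \<le> s"
  shows "(x + s) mod n \<notin> cyc_arc n (x + a) l"
proof
  assume "(x + s) mod n \<in> cyc_arc n (x + a) l"
  then obtain t where "t < l" "(x + s) mod n = (x + (a + t)) mod n"
    unfolding cyc_arc_def by (auto simp: add.assoc)
  with assms mod_add_left_cancel_less[of x s n "a + t"] show False
    by linarith
qed

lemma cyc_arc_minus_end:
  assumes "0 < l" "l < n"
    and end_of_arc: "c = x mod n \<or> c = (x + (l - 1)) mod n"
    and next_to_arc: "v = (x + (n - 1)) mod n \<or> v = (x + l) mod n"
  obtains y l' where "cyc_arc n x l - {c} \<subseteq> cyc_arc n y l'" "cyc_arc n y l' \<inter> {c, v} = {}"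
proof (cases "c = x mod n")
  case True
  have "cyc_arc n x l - {c} \<subseteq> cyc_arc n (x + 1) (l - 1)"
  proof
    fix z assume "z \<in> cyc_arc n x l - {c}"
    then obtain s where "s < l" "z = (x + s) mod n" "z \<noteq> c"
      unfolding cyc_arc_def by auto
    moreover from this True have "s \<noteq> 0"
      by (metis add_0_right)
    ultimately show "z \<in> cyc_arc n (x + 1) (l - 1)"
      unfolding cyc_arc_def by (auto intro!: image_eqI[where x = "s - 1"])
  qed
  moreover have outside: "(x + s) mod n \<notin> cyc_arc n (x + 1) (l - 1)" if "s \<in> {0, n - 1, l}" for s
    using that assms(1,2) by (intro mod_add_notin_cyc_arc) auto
  then have "cyc_arc n (x + 1) (l - 1) \<inter> {c, v} = {}"
    using outside[of 0] outside[of "n - 1"] outside[of l] True next_to_arc by auto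
  ultimately show ?thesis
    by (rule that)
next
  case False
  then have last: "c = (x + (l - 1)) mod n"
    using end_of_arc by simp
  have "cyc_arc n x l - {c} \<subseteq> cyc_arc n x (l - 1)"
  proof
    fix z assume "z \<in> cyc_arc n x l - {c}"
    then obtain s where "s < l" "z = (x + s) mod n" "s \<noteq> l - 1"
      using last unfolding cyc_arc_def by auto
    then show "z \<in> cyc_arc n x (l - 1)"
      unfolding cyc_arc_def by auto
  qed
  moreover have outside: "(x + s) mod n \<notin> cyc_arc n (x + 0) (l - 1)" if "s \<in> {l - 1, n - 1, l}" for s
    using that assms(1,2) by (intro mod_add_notin_cyc_arc) auto
  then have "cyc_arc n x (l - 1) \<inter> {c, v} = {}"
    using outside[of "l - 1"] outside[of "n - 1"] outside[of l] last next_to_arc by auto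
  ultimately show ?thesis
    by (rule that)
qed

text \<open>Without its end the arc is an arc avoiding both endpoints of the new edge, so it lies on one
  side of that edge.\<close>

lemma cyc_arc_path_snoc:
  assumes "noncrossing p" "distinct p" "set p = cyc_arc n x l" "0 < l" "l < n"
    and end_of_arc: "last p = x mod n \<or> last p = (x + (l - 1)) mod n"
    and next_to_arc: "v = (x + (n - 1)) mod n \<or> v = (x + l) mod n"
  shows "noncrossing (p @ [v])" "distinct (p @ [v])"
proof -
  obtain y l' where rest: "set p - {last p} \<subseteq> cyc_arc n y l'"
    and avoid: "cyc_arc n y l' \<inter> {last p, v} = {}"
    using cyc_arc_minus_end[OF assms(4,5) end_of_arc next_to_arc] assms(3) by metis
  have "last p < n" "v < n"
    using assms(5) end_of_arc next_to_arc by auto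
  show "noncrossing (p @ [v])"
  proof (rule noncrossing_snoc[OF assms(1)])
    show "p \<noteq> []"
      using assms(3,4) unfolding cyc_arc_def by auto
    fix a b
    assume "a \<in> set p" "b \<in> set p"
    then show "\<not> seg_cross (last p) v a b"
      using rest strictly_between_cyc_arc[OF \<open>last p < n\<close> \<open>v < n\<close> avoid]
      unfolding seg_cross_def by blast
  qed
  have "(x + s) mod n \<notin> cyc_arc n (x + 0) l" if "s \<in> {n - 1, l}" for s
    using that assms(5) by (intro mod_add_notin_cyc_arc) auto
  with assms(2,3) next_to_arc show "distinct (p @ [v])"
    by auto
qed

section \<open>Choosing the offset\<close>

text \<open>The directions 2i+1 mod n (i < m) of the edges of B, represented by integers in (-n, n).\<close>

definition blocker_dir :: "int \<Rightarrow> bool" where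
  "blocker_dir t \<longleftrightarrow> (0 \<le> t \<and> (t = 0 \<or> odd t)) \<or> (t < 0 \<and> even t)"

lemma blocker_dir_iff_mod:
  fixes n t :: int
  assumes "odd n" "- n < t" "t < n"
  shows "blocker_dir t \<longleftrightarrow> t mod n = 0 \<or> odd (t mod n)"
proof (cases "0 \<le> t")
  case True
  with assms show ?thesis unfolding blocker_dir_def by simp
next
  case False
  have "t mod n = (t + n) mod n"
    by simp
  also have "\<dots> = t + n"
    using assms False by (intro mod_pos_pos_trivial) auto
  finally have "t mod n = t + n" .
  with False assms show ?thesis unfolding blocker_dir_def by auto
qed

lemma blocker_dir_nonpos: "blocker_dir t \<Longrightarrow> t \<le> 0 \<Longrightarrow> t = 0 \<or> (t \<le> -2 \<and> even t)"
  unfolding blocker_dir_def by presburger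

lemma blocker_dir_consecutive: "blocker_dir t \<Longrightarrow> blocker_dir (t + 1) \<Longrightarrow> t = 0"
  unfolding blocker_dir_def by presburger

lemma Max_interval:
  fixes P :: "int \<Rightarrow> bool"
  assumes "lo \<le> hi" "P lo"
  defines "M \<equiv> Max {d \<in> {lo..hi}. P d}"
  shows "lo \<le> M \<and> M \<le> hi \<and> P M" and "M < d \<Longrightarrow> d \<le> hi \<Longrightarrow> \<not> P d"
proof -
  have fin: "finite {d \<in> {lo..hi}. P d}"
    by (rule finite_subset[of _ "{lo..hi}"]) auto
  moreover have "lo \<in> {d \<in> {lo..hi}. P d}"
    using assms by auto
  ultimately have "M \<in> {d \<in> {lo..hi}. P d}"
    unfolding M_def by (intro Max_in) auto
  then show "lo \<le> M \<and> M \<le> hi \<and> P M"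
    by simp
  show "\<not> P d" if "M < d" "d \<le> hi"
  proof
    assume "P d"
    with that \<open>lo \<le> M \<and> M \<le> hi \<and> P M\<close> have "d \<in> {d \<in> {lo..hi}. P d}"
      by simp
    with fin have "d \<le> M"
      unfolding M_def by (rule Max_ge)
    with \<open>M < d\<close> show False
      by simp
  qed
qed

text \<open>\<open>W d x\<close> abstracts "the diagonal of offset d at side vertex x lies in B". In the application
  \<open>a = \<alpha>\<close>, and the witnesses of the offsets \<open>a + 1\<close> and \<open>lo\<close> are the edges [\<alpha>, \<alpha>+1] and
  [\<beta>, \<beta>+1] of B.\<close>

locale offset_witnesses =
  fixes W :: "int \<Rightarrow> nat \<Rightarrow> bool" and a j k :: nat and lo :: int
  assumes witness_unique: "W d x \<Longrightarrow> W d y \<Longrightarrow> x = y"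
    and witness_dir: "W d x \<Longrightarrow> blocker_dir (int a + d)"
    and first_witness: "\<exists>x\<le>j. W (int a + 1) x"
    and last_witness: "\<exists>x\<ge>k. W lo x"
    and lo_nonpos: "int a + lo \<le> 0" and lo_even: "even (int a + lo)"
    and j_less_k: "j < k"
begin

definition free_below :: "int \<Rightarrow> nat \<Rightarrow> bool" where
  "free_below d y \<longleftrightarrow> (\<forall>x<y. \<not> W d x)"

definition free_above :: "int \<Rightarrow> nat \<Rightarrow> bool" where
  "free_above d y \<longleftrightarrow> (\<forall>x\<ge>y. \<not> W d x)"

definition good_offset :: "int \<Rightarrow> bool" where
  "good_offset D \<longleftrightarrow> lo \<le> D \<and> D \<le> int a \<and> free_below (D - 1) j \<and> free_below D k
    \<and> free_above (D + 1) (j + 2) \<and> free_above (D + 2) (k + 2)"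

lemma free_if_not_blocker_dir:
  "\<not> blocker_dir (int a + d) \<Longrightarrow> free_below d y \<and> free_above d y"
  unfolding free_below_def free_above_def using witness_dir by blast

lemma free_above_if_witness_below: "x < y \<Longrightarrow> W d x \<Longrightarrow> free_above d y"
  unfolding free_above_def using witness_unique[of d x] by (metis not_le)

lemma lo_blocker_dir: "blocker_dir (int a + lo)"
  using lo_nonpos lo_even unfolding blocker_dir_def by auto

lemma free_below_lo: "free_below lo k"
  using last_witness witness_unique[of lo] unfolding free_below_def by (metis not_le)

lemma free_above_first: "free_above (int a + 1) (j + 2)"
proof -
  obtain x where "x \<le> j" "W (int a + 1) x"
    using first_witness by blast
  then show ?thesis
    using free_above_if_witness_below[of x "j + 2"] by simp
qed

text \<open>If \<open>d1 + 1\<close> is not a blocker offset it is good; otherwise \<open>a + d1 = 0\<close>, and then the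
  largest blocker offset up to \<open>d1\<close> without a witness before k is good.\<close>

definition d1 :: int where
  "d1 = Max {d \<in> {lo..int a}. blocker_dir (int a + d) \<and> free_below d j}"

lemma d1: "lo \<le> d1 \<and> d1 \<le> int a \<and> blocker_dir (int a + d1) \<and> free_below d1 j"
  and d1_max: "d1 < d \<Longrightarrow> d \<le> int a \<Longrightarrow> blocker_dir (int a + d) \<Longrightarrow> \<not> free_below d j"
proof -
  have "lo \<le> int a" "free_below lo j"
    using lo_nonpos free_below_lo j_less_k unfolding free_below_def by auto
  with lo_blocker_dir show "lo \<le> d1 \<and> d1 \<le> int a \<and> blocker_dir (int a + d1) \<and> free_below d1 j"
    "d1 < d \<Longrightarrow> d \<le> int a \<Longrightarrow> blocker_dir (int a + d) \<Longrightarrow> \<not> free_below d j"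
    unfolding d1_def using Max_interval[of lo "int a" "\<lambda>d. blocker_dir (int a + d) \<and> free_below d j"]
    by blast+
qed

lemma free_above_beyond_d1:
  assumes "d1 < d" "d \<le> int a + 1"
  shows "free_above d (j + 2) \<and> free_above d (k + 2)"
proof (cases "d = int a + 1")
  case True
  then show ?thesis
    using free_above_first j_less_k unfolding free_above_def by auto
next
  case False
  show ?thesis
  proof (cases "blocker_dir (int a + d)")
    case True
    with assms False d1_max[of d] obtain x where "x < j" "W d x"
      unfolding free_below_def by auto
    with j_less_k show ?thesis
      using free_above_if_witness_below[of x "j + 2"] free_above_if_witness_below[of x "k + 2"] by simp
  qed (use free_if_not_blocker_dir in blast)
qed

lemma good_offset_Suc_d1:
  assumes "\<not> blocker_dir (int a + d1 + 1)"
  shows "good_offset (d1 + 1)"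
proof -
  have "d1 \<noteq> int a"
    using assms unfolding blocker_dir_def by auto
  then have "d1 + 1 \<le> int a"
    using d1 by auto
  moreover have "free_above (d1 + 3) (k + 2)"
  proof (cases "d1 + 1 = int a")
    case True
    then have eq: "int a + (d1 + 3) = 2 * int a + 2"
      by linarith
    have "\<not> blocker_dir (int a + (d1 + 3))"
      unfolding blocker_dir_def eq by simp
    then show ?thesis using free_if_not_blocker_dir by blast
  qed (use free_above_beyond_d1 \<open>d1 + 1 \<le> int a\<close> in simp)
  moreover have "free_below (d1 + 1) k"
    using assms free_if_not_blocker_dir by (simp add: add.assoc)
  ultimately show ?thesis
    unfolding good_offset_def using d1 free_above_beyond_d1[of "d1 + 2"] by (simp add: ac_simps)
qed

definition d2 :: int where
  "d2 = Max {d \<in> {lo..d1}. blocker_dir (int a + d) \<and> free_below d k}"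

lemma d2: "lo \<le> d2 \<and> d2 \<le> d1 \<and> blocker_dir (int a + d2) \<and> free_below d2 k"
  and d2_max: "d2 < d \<Longrightarrow> d \<le> d1 \<Longrightarrow> blocker_dir (int a + d) \<Longrightarrow> \<not> free_below d k"
  using Max_interval[of lo d1 "\<lambda>d. blocker_dir (int a + d) \<and> free_below d k"]
    d1 lo_blocker_dir free_below_lo unfolding d2_def by blast+

lemma good_offset_d2:
  assumes "int a + d1 = 0"
  shows "good_offset d2"
proof -
  have "int a + d2 \<le> 0"
    using d2 assms by linarith
  then have d2_cases: "int a + d2 = 0 \<or> (int a + d2 \<le> -2 \<and> even (int a + d2))"
    using d2 blocker_dir_nonpos by blast
  have "\<not> blocker_dir (int a + (d2 - 1))"
    using d2_cases unfolding blocker_dir_def by presburger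
  then have "free_below (d2 - 1) j"
    using free_if_not_blocker_dir by blast
  moreover have "free_above (d2 + 1) (j + 2)"
  proof (cases "int a + d2 = 0")
    case False
    with d2_cases have "\<not> blocker_dir (int a + (d2 + 1))"
      unfolding blocker_dir_def by presburger
    then show ?thesis using free_if_not_blocker_dir by blast
  qed (use assms free_above_beyond_d1[of "d2 + 1"] in auto)
  moreover have "free_above (d2 + 2) (k + 2)"
  proof (cases "int a + d2 = 0")
    case True
    then have eq: "int a + (d2 + 2) = 2"
      by linarith
    have "\<not> blocker_dir (int a + (d2 + 2))"
      unfolding eq blocker_dir_def by simp
    then show ?thesis using free_if_not_blocker_dir by blast
  next
    case False
    with d2_cases have "blocker_dir (int a + (d2 + 2))"
      unfolding blocker_dir_def by presburger
    moreover from False d2_cases assms have "d2 + 2 \<le> d1"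
      by linarith
    ultimately obtain x where "x < k" "W (d2 + 2) x"
      using d2_max[of "d2 + 2"] unfolding free_below_def by auto
    then show ?thesis
      using free_above_if_witness_below[of x "k + 2"] by simp
  qed
  ultimately show ?thesis
    using d2 d1 unfolding good_offset_def by auto
qed

theorem exists_good_offset: "\<exists>D. good_offset D"
proof (cases "blocker_dir (int a + d1 + 1)")
  case True
  then have "int a + d1 = 0"
    using blocker_dir_consecutive d1 by (simp add: add.assoc)
  then show ?thesis
    using good_offset_d2 by blast
qed (use good_offset_Suc_d1 in blast)

end

section \<open>The path construction\<close>

lemma edge_dir_doubleton: "x \<noteq> y \<Longrightarrow> edge_dir n {x, y} = (x + y) mod n"
  unfolding edge_dir_def by simp

locale two_free_edges =
  fixes n m :: nat and B :: "nat set set" and \<alpha> \<beta> j k :: nat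
  assumes n_eq: "n = 2 * m - 1"
    and meets: "meets_all_SHP n B"
    and dirs_in: "\<forall>e\<in>B. \<exists>i<m. edge_dir n e = edge_dir n {i, i + 1}"
    and one_per_dir: "\<forall>i<m. \<exists>!e. e \<in> B \<and> edge_dir n e = edge_dir n {i, i + 1}"
    and first_in_B: "{\<alpha>, \<alpha> + 1} \<in> B" and before_first: "\<forall>i<\<alpha>. {i, i + 1} \<notin> B"
    and last_in_B: "{\<beta>, \<beta> + 1} \<in> B" and after_last: "\<forall>i. \<beta> < i \<and> i < m \<longrightarrow> {i, i + 1} \<notin> B"
    and \<beta>_less: "\<beta> < m" and order: "\<alpha> < j" "j < k" "k < \<beta>"
    and j_free: "{j, j + 1} \<notin> B" and k_free: "{k, k + 1} \<notin> B"
begin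

lemma n_facts: "odd n" "\<alpha> + \<beta> + 3 \<le> n" "2 * \<beta> + 1 \<le> n"
  using n_eq \<beta>_less order by auto

definition L :: nat where
  "L = n + \<alpha> - \<beta>"

text \<open>The L vertices outside \<alpha>+1..\<beta>, counterclockwise from \<open>chain 0 = \<alpha>\<close> to
  \<open>chain (L - 1) = \<beta> + 1\<close>.\<close>

definition chain :: "nat \<Rightarrow> nat" where
  "chain i = (\<alpha> + n - i) mod n"

lemma L_facts: "\<alpha> < L - 1" "L \<le> n" "L + \<beta> = n + \<alpha>"
  using n_facts order unfolding L_def by auto

lemma chain_less: "chain i < n"
  using n_facts unfolding chain_def by simp

lemma chain_eq: "i < L \<Longrightarrow> chain i = (if i \<le> \<alpha> then \<alpha> - i else \<alpha> + n - i)"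
proof (cases "i \<le> \<alpha>")
  case True
  then have shift: "\<alpha> + n - i = (\<alpha> - i) + n" and "\<alpha> - i < n"
    using L_facts by linarith+
  have "chain i = (\<alpha> - i + n) mod n"
    unfolding chain_def shift ..
  also have "\<dots> = \<alpha> - i"
    using \<open>\<alpha> - i < n\<close> by simp
  finally show ?thesis
    using True by simp
qed (use L_facts in \<open>auto simp: chain_def\<close>)

lemma chain_0: "chain 0 = \<alpha>"
  using chain_eq[of 0] L_facts by simp

lemma chain_last: "chain (L - 1) = Suc \<beta>"
  using chain_eq[of "L - 1"] L_facts by auto

lemma chain_not_side: "i < L \<Longrightarrow> \<alpha> < x \<Longrightarrow> x \<le> \<beta> \<Longrightarrow> chain i \<noteq> x"
  using chain_eq[of i] L_facts by auto

lemma chain_Suc: "Suc i < L \<Longrightarrow> chain (Suc i) = (chain i + (n - 1)) mod n"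
proof -
  assume "Suc i < L"
  then have "\<alpha> + n - i + (n - 1) = (\<alpha> + n - Suc i) + n"
    using L_facts by linarith
  then show ?thesis
    unfolding chain_def by (simp add: mod_add_left_eq)
qed

lemma chain_arc_end:
  assumes "\<alpha> \<le> b" "b < n" "i < L"
  shows "(chain i + (i + (b - \<alpha>))) mod n = b"
proof -
  have sum: "\<alpha> + n - i + (i + (b - \<alpha>)) = b + n"
    using assms L_facts by linarith
  have "(chain i + (i + (b - \<alpha>))) mod n = (\<alpha> + n - i + (i + (b - \<alpha>))) mod n"
    unfolding chain_def by (rule mod_add_left_eq)
  also have "\<dots> = b"
    unfolding sum using assms(2) by simp
  finally show ?thesis .
qed

text \<open>The path has visited \<open>chain 0, ..., chain i\<close> and the side up to b; these vertices form the
  cyclic arc starting at \<open>chain i\<close>, and the path ends at \<open>chain i\<close> or at b.\<close>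

definition arc_path :: "nat \<Rightarrow> nat \<Rightarrow> nat \<Rightarrow> nat list \<Rightarrow> bool" where
  "arc_path i b c p \<longleftrightarrow> i < L \<and> \<alpha> \<le> b \<and> b \<le> \<beta> \<and> set p = cyc_arc n (chain i) (Suc (i + (b - \<alpha>)))
    \<and> distinct p \<and> last p = c \<and> (c = chain i \<or> c = b) \<and> path_edges p \<inter> B = {} \<and> noncrossing p"

lemma arc_path_start: "arc_path 0 \<alpha> \<alpha> [\<alpha>]"
proof -
  have "cyc_arc n (chain 0) 1 = {\<alpha>}"
    using chain_0 chain_less[of 0] unfolding cyc_arc_def by (simp add: lessThan_Suc)
  moreover have "path_edges [\<alpha>] = {}" "noncrossing [\<alpha>]"
    unfolding path_edges_def noncrossing_def by simp_all
  ultimately show ?thesis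
    unfolding arc_path_def using L_facts order by auto
qed

lemma arc_path_to_chain:
  assumes "arc_path i b c p" "Suc i < L" "{c, chain (Suc i)} \<notin> B"
  shows "arc_path (Suc i) b (chain (Suc i)) (p @ [chain (Suc i)])"
proof -
  define l where "l = Suc (i + (b - \<alpha>))"
  have path: "set p = cyc_arc n (chain i) l" "last p = c" "c = chain i \<or> c = b" "\<alpha> \<le> b" "b \<le> \<beta>"
    using assms(1) unfolding arc_path_def l_def by auto
  have "0 < l" "l < n" "b < n"
    using assms(2) path(4,5) L_facts n_facts unfolding l_def by linarith+
  then have ends: "last p = chain i mod n \<or> last p = (chain i + (l - 1)) mod n"
    using path assms(2) chain_arc_end[of b i] chain_less[of i] unfolding l_def by auto
  have next_vertex: "chain (Suc i) = (chain i + (n - 1)) mod n"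
    using chain_Suc assms(2) by blast
  have "set (p @ [chain (Suc i)]) = cyc_arc n (chain (Suc i)) (Suc (Suc i + (b - \<alpha>)))"
    using path(1) cyc_arc_Suc_back[of n "chain i" l] \<open>l < n\<close>
    unfolding next_vertex l_def by auto
  moreover have "noncrossing (p @ [chain (Suc i)])" "distinct (p @ [chain (Suc i)])"
    using cyc_arc_path_snoc[of p n "chain i" l] assms(1) path(1) \<open>0 < l\<close> \<open>l < n\<close> ends next_vertex
    unfolding arc_path_def by auto
  moreover have "path_edges (p @ [chain (Suc i)]) \<inter> B = {}"
    using assms path path_edges_snoc[of p "chain (Suc i)"] \<open>0 < l\<close>
    unfolding arc_path_def cyc_arc_def by fastforce
  ultimately show ?thesis
    using assms(2) path unfolding arc_path_def by auto
qed

lemma arc_path_to_side: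
  assumes "arc_path i b c p" "b < \<beta>" "{c, Suc b} \<notin> B"
  shows "arc_path i (Suc b) (Suc b) (p @ [Suc b])"
proof -
  define l where "l = Suc (i + (b - \<alpha>))"
  have path: "set p = cyc_arc n (chain i) l" "last p = c" "c = chain i \<or> c = b" "\<alpha> \<le> b" "i < L"
    using assms(1) unfolding arc_path_def l_def by auto
  have "0 < l" "l < n" "Suc b < n"
    using assms(2) path(4,5) L_facts n_facts unfolding l_def by linarith+
  then have ends: "last p = chain i mod n \<or> last p = (chain i + (l - 1)) mod n"
    using path chain_arc_end[of b i] chain_less[of i] unfolding l_def by auto
  have "l = i + (Suc b - \<alpha>)"
    using path(4) unfolding l_def by auto
  then have "(chain i + l) mod n = Suc b"
    using path(4,5) chain_arc_end[of "Suc b" i] \<open>Suc b < n\<close> by simp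
  then have next_vertex: "Suc b = (chain i + l) mod n" ..
  have "set (p @ [Suc b]) = insert ((chain i + l) mod n) (cyc_arc n (chain i) l)"
    using path(1) next_vertex by simp
  also have "\<dots> = cyc_arc n (chain i) (Suc (i + (Suc b - \<alpha>)))"
    using cyc_arc_Suc \<open>l = i + (Suc b - \<alpha>)\<close> by simp
  finally have "set (p @ [Suc b]) = cyc_arc n (chain i) (Suc (i + (Suc b - \<alpha>)))" .
  moreover have "noncrossing (p @ [Suc b])" "distinct (p @ [Suc b])"
    using cyc_arc_path_snoc[of p n "chain i" l] assms(1) path(1) \<open>0 < l\<close> \<open>l < n\<close> ends next_vertex
    unfolding arc_path_def by auto
  moreover have "path_edges (p @ [Suc b]) \<inter> B = {}"
    using assms path path_edges_snoc[of p "Suc b"] \<open>0 < l\<close>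
    unfolding arc_path_def cyc_arc_def by fastforce
  ultimately show ?thesis
    using assms(2) path unfolding arc_path_def by auto
qed

lemma arc_path_everything_impossible:
  assumes "arc_path (L - 1) \<beta> c p"
  shows False
proof -
  have "Suc (L - 1 + (\<beta> - \<alpha>)) = n"
    using L_facts order by linarith
  then have "is_SHP n p"
    using assms cyc_arc_full[of n] n_facts unfolding is_SHP_iff arc_path_def by auto
  then show False
    using meets assms unfolding meets_all_SHP_def arc_path_def by auto
qed

lemma edge_dir_in_B: "e \<in> B \<Longrightarrow> edge_dir n e = 0 \<or> odd (edge_dir n e)"
proof -
  assume "e \<in> B"
  then obtain i where "i < m" and dir: "edge_dir n e = edge_dir n {i, i + 1}"
    using dirs_in by blast
  have "edge_dir n {i, i + 1} = (2 * i + 1) mod n"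
    using edge_dir_doubleton[of i "i + 1" n] by (simp add: mult_2)
  moreover have "2 * i + 1 = n \<or> 2 * i + 1 < n"
    using \<open>i < m\<close> n_eq by linarith
  ultimately show ?thesis
    unfolding dir by auto
qed

lemma B_dir_unique: "e \<in> B \<Longrightarrow> e' \<in> B \<Longrightarrow> edge_dir n e = edge_dir n e' \<Longrightarrow> e = e'"
  using dirs_in one_per_dir by metis

lemma even_dir_notin_B: "x \<noteq> y \<Longrightarrow> even ((x + y) mod n) \<Longrightarrow> (x + y) mod n \<noteq> 0 \<Longrightarrow> {x, y} \<notin> B"
  using edge_dir_in_B edge_dir_doubleton by metis

lemma edge_beyond_last_notin_B:
  assumes "\<beta> < x" "x + 1 < n"
  shows "{x, x + 1} \<notin> B"
proof (cases "x < m")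
  case True
  with assms(1) show ?thesis
    using after_last by blast
next
  case False
  then have sum: "x + (x + 1) = (2 * (x - m) + 2) + n" and "2 * (x - m) + 2 < n"
    using assms(2) n_eq by linarith+
  then have "(x + (x + 1)) mod n = 2 * (x - m) + 2"
    unfolding sum by (simp only: mod_add_self2 mod_less)
  then show ?thesis
    using even_dir_notin_B[of x "x + 1"] by simp
qed

lemma chain_edge_notin_B:
  assumes "Suc i < L"
  shows "{chain i, chain (Suc i)} \<notin> B"
proof -
  consider "Suc i \<le> \<alpha>" | "i = \<alpha>" | "\<alpha> < i"
    by linarith
  then show ?thesis
  proof cases
    case 1
    then have "{chain i, chain (Suc i)} = {\<alpha> - Suc i, \<alpha> - Suc i + 1}"
      using assms chain_eq[of i] chain_eq[of "Suc i"] by auto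
    with 1 show ?thesis
      using before_first by (metis diff_less zero_less_Suc less_le_trans)
  next
    case 2
    then have "{chain i, chain (Suc i)} = {0, n - 1}"
      using assms chain_eq[of i] chain_eq[of "Suc i"] by auto
    with n_facts show ?thesis
      using even_dir_notin_B[of 0 "n - 1"] by auto
  next
    case 3
    define x where "x = \<alpha> + n - Suc i"
    have "chain (Suc i) = x" "chain i = x + 1"
      using assms 3 chain_eq[of i] chain_eq[of "Suc i"] L_facts unfolding x_def by auto
    moreover have "\<beta> < x" "x + 1 < n"
      using assms 3 L_facts unfolding x_def by linarith+
    ultimately show ?thesis
      using edge_beyond_last_notin_B by (simp add: insert_commute)
  qed
qed

text \<open>Diagonals are indexed by their offset d: the one at side vertex x goes to \<open>chain (x - d)\<close>
  and has direction \<open>\<alpha> + d mod n\<close>.\<close>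

definition blocked :: "int \<Rightarrow> nat \<Rightarrow> bool" where
  "blocked d x \<longleftrightarrow> \<alpha> < x \<and> x \<le> \<beta> \<and> 0 \<le> int x - d \<and> int x - d < int L
    \<and> {chain (nat (int x - d)), x} \<in> B"

lemma diag_notin_B: "\<not> blocked (int x - int i) x \<Longrightarrow> \<alpha> < x \<Longrightarrow> x \<le> \<beta> \<Longrightarrow> i < L \<Longrightarrow> {chain i, x} \<notin> B"
  unfolding blocked_def by auto

lemma blocked_dir:
  assumes "blocked d x"
  shows "int (edge_dir n {chain (nat (int x - d)), x}) = (int \<alpha> + d) mod int n"
proof -
  define c where "c = nat (int x - d)"
  have c: "c < L" "int c = int x - d" and side: "\<alpha> < x" "x \<le> \<beta>"
    using assms unfolding blocked_def c_def by auto
  have "int (edge_dir n {chain c, x}) = (int (chain c) + int x) mod int n"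
    using edge_dir_doubleton chain_not_side[OF c(1) side] by (simp add: of_nat_mod)
  also have "int (chain c) = (int \<alpha> + int n - int c) mod int n"
    using c L_facts unfolding chain_def by (simp add: of_nat_mod of_nat_diff)
  also have "((int \<alpha> + int n - int c) mod int n + int x) mod int n
      = (int \<alpha> + int n - int c + int x) mod int n"
    by (rule mod_add_left_eq)
  also have "int \<alpha> + int n - int c + int x = (int \<alpha> + d) + int n"
    using c by simp
  also have "((int \<alpha> + d) + int n) mod int n = (int \<alpha> + d) mod int n"
    by (rule mod_add_self2)
  finally show ?thesis
    unfolding c_def .
qed

lemma blocked_unique:
  assumes "blocked d x" "blocked d y"
  shows "x = y"
proof -
  have in_B: "{chain (nat (int x - d)), x} \<in> B" "{chain (nat (int y - d)), y} \<in> B"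
    using assms unfolding blocked_def by auto
  then have "{chain (nat (int x - d)), x} = {chain (nat (int y - d)), y}"
    using B_dir_unique blocked_dir[OF assms(1)] blocked_dir[OF assms(2)] by auto
  moreover have "nat (int y - d) < L" "\<alpha> < x" "x \<le> \<beta>"
    using assms unfolding blocked_def by auto
  then have "chain (nat (int y - d)) \<noteq> x"
    by (rule chain_not_side)
  ultimately show ?thesis
    by (metis doubleton_eq_iff)
qed

lemma blocked_blocker_dir:
  assumes "blocked d x"
  shows "blocker_dir (int \<alpha> + d)"
proof -
  have "{chain (nat (int x - d)), x} \<in> B"
    using assms unfolding blocked_def by auto
  with blocked_dir[OF assms] have "(int \<alpha> + d) mod int n = 0 \<or> odd ((int \<alpha> + d) mod int n)"
    using edge_dir_in_B by (metis even_of_nat of_nat_eq_0_iff)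
  moreover have "- int n < int \<alpha> + d" "int \<alpha> + d < int n"
    using assms n_facts L_facts unfolding blocked_def by linarith+
  ultimately show ?thesis
    using blocker_dir_iff_mod[of "int n"] n_facts by simp
qed

lemma blocked_first: "blocked (int \<alpha> + 1) (Suc \<alpha>)"
  using first_in_B chain_0 L_facts order unfolding blocked_def by auto

lemma blocked_last: "blocked (int \<beta> + 1 - int L) \<beta>"
proof -
  have "nat (int \<beta> - (int \<beta> + 1 - int L)) = L - 1"
    using L_facts by linarith
  then show ?thesis
    using last_in_B chain_last L_facts order unfolding blocked_def by (auto simp: insert_commute)
qed

sublocale offset_witnesses blocked \<alpha> j k "int \<beta> + 1 - int L"
proof
  have eq: "int \<alpha> + (int \<beta> + 1 - int L) = 2 * int \<beta> + 1 - int n"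
    using L_facts by linarith
  show "int \<alpha> + (int \<beta> + 1 - int L) \<le> 0" "even (int \<alpha> + (int \<beta> + 1 - int L))"
    unfolding eq using n_facts by simp_all
  show "\<exists>x\<le>j. blocked (int \<alpha> + 1) x"
    using blocked_first order by (intro exI[of _ "Suc \<alpha>"]) simp
  show "\<exists>x\<ge>k. blocked (int \<beta> + 1 - int L) x"
    using blocked_last order by (intro exI[of _ \<beta>]) simp
qed (use blocked_unique blocked_blocker_dir order in auto)

definition on_chain :: "nat \<Rightarrow> nat \<Rightarrow> bool" where
  "on_chain i b \<longleftrightarrow> (\<exists>p. arc_path i b (chain i) p)"

lemma on_chain_start: "on_chain 0 \<alpha>"
  using arc_path_start chain_0 unfolding on_chain_def by auto

lemma on_chain_run:
  assumes "on_chain i b" "i \<le> i'" "i' < L"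
  shows "on_chain i' b"
  using assms(2,3)
proof (induction i')
  case (Suc i')
  show ?case
  proof (cases "i = Suc i'")
    case False
    with Suc obtain p where "arc_path i' b (chain i') p"
      unfolding on_chain_def by auto
    then have "arc_path (Suc i') b (chain (Suc i')) (p @ [chain (Suc i')])"
      using arc_path_to_chain chain_edge_notin_B Suc.prems by blast
    then show ?thesis
      unfolding on_chain_def by blast
  qed (use assms(1) in simp)
qed (use assms(1) in simp)

lemma arc_path_side_run:
  assumes "arc_path i b c p" "{c, Suc b} \<notin> B" "b < b'" "b' \<le> \<beta>"
    and "\<forall>x. b < x \<longrightarrow> x < b' \<longrightarrow> {x, Suc x} \<notin> B"
  shows "\<exists>p'. arc_path i b' b' p'"
  using assms(3-5)
proof (induction b')
  case (Suc b')
  show ?case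
  proof (cases "b = b'")
    case True
    then show ?thesis
      using arc_path_to_side[OF assms(1)] assms(2) Suc.prems by auto
  next
    case False
    with Suc obtain p' where "arc_path i b' b' p'"
      by auto
    moreover have "{b', Suc b'} \<notin> B" "b' < \<beta>"
      using Suc.prems False by auto
    ultimately show ?thesis
      using arc_path_to_side by blast
  qed
qed simp

text \<open>From \<open>chain i\<close> enter the side at \<open>b + 1\<close>, walk along it to \<open>b'\<close> and return to
  \<open>chain (i + 1)\<close>.\<close>

lemma on_chain_detour:
  assumes "on_chain i b" "int b - int i = d" "b < b'" "b' \<le> \<beta>" "Suc i < L"
    and "\<not> blocked (d + 1) (Suc b)" "\<forall>x. b < x \<longrightarrow> x < b' \<longrightarrow> {x, Suc x} \<notin> B"
    and "\<not> blocked (d + int (b' - b) - 1) b'"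
  shows "on_chain (Suc i) b'"
proof -
  obtain p where p: "arc_path i b (chain i) p"
    using assms(1) unfolding on_chain_def by auto
  then have "\<alpha> \<le> b" "i < L"
    unfolding arc_path_def by auto
  have off_side: "int (Suc b) - int i = d + 1" and off_chain: "int b' - int (Suc i) = d + int (b' - b) - 1"
    using assms(2,3) by auto
  have "{chain i, Suc b} \<notin> B"
  proof (rule diag_notin_B)
    show "\<not> blocked (int (Suc b) - int i) (Suc b)"
      unfolding off_side by (rule assms(6))
  qed (use assms \<open>\<alpha> \<le> b\<close> \<open>i < L\<close> in auto)
  then obtain p' where "arc_path i b' b' p'"
    using arc_path_side_run[OF p] assms by blast
  moreover have "{b', chain (Suc i)} \<notin> B"
    unfolding insert_commute[of b']
  proof (rule diag_notin_B)
    show "\<not> blocked (int b' - int (Suc i)) b'"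
      unfolding off_chain by (rule assms(8))
  qed (use assms \<open>\<alpha> \<le> b\<close> in auto)
  ultimately show ?thesis
    using arc_path_to_chain assms(5) unfolding on_chain_def by blast
qed

lemma on_chain_zigzag:
  assumes "on_chain i b" "int b - int i = d" "b + r \<le> \<beta>" "i + r < L"
    and "\<forall>x. b < x \<longrightarrow> x \<le> b + r \<longrightarrow> \<not> blocked (d + 1) x \<and> \<not> blocked d x"
  shows "on_chain (i + r) (b + r)"
  using assms(3-5)
proof (induction r)
  case (Suc r)
  then have "on_chain (i + r) (b + r)"
    by auto
  then show ?case
    using on_chain_detour[of "i + r" "b + r" d "Suc (b + r)"] Suc.prems assms(2) by auto
qed (use assms(1) in simp)

lemma on_chain_past_adjacent_free_edges:
  assumes "on_chain i (j - 1)" "int (j - 1) - int i = D - 1" "Suc i < L" "k = Suc j"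
    and "\<not> blocked D j" "\<not> blocked (D + 1) (k + 1)"
  shows "on_chain (Suc i) (k + 1)"
proof (rule on_chain_detour[OF assms(1,2)])
  show "\<forall>x. j - 1 < x \<longrightarrow> x < k + 1 \<longrightarrow> {x, Suc x} \<notin> B"
    using assms(4) j_free k_free by (auto simp: less_Suc_eq)
  show "\<not> blocked (D - 1 + int (k + 1 - (j - 1)) - 1) (k + 1)"
    using assms(4,6) order by (simp add: of_nat_diff ac_simps)
qed (use assms order in auto)

lemma on_chain_past_free_edges:
  assumes "on_chain i (j - 1)" "int (j - 1) - int i = D - 1" "i + (k - j) < L"
    and "free_below D k" "free_above (D + 1) (j + 2)"
  shows "on_chain (i + (k - j)) (k + 1)"
proof -
  have below: "\<not> blocked D x" if "x < k" for x
    using assms(4) that unfolding free_below_def by blast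
  have above: "\<not> blocked (D + 1) x" if "j + 2 \<le> x" for x
    using assms(5) that unfolding free_above_def by blast
  show ?thesis
  proof (cases "k = Suc j")
    case True
    with assms(1-3) show ?thesis
      using on_chain_past_adjacent_free_edges below[of j] above[of "k + 1"] by simp
  next
    case False
    then have "j + 2 \<le> k"
      using order by simp
    have "on_chain (Suc i) (j + 1)"
    proof (rule on_chain_detour[OF assms(1,2)])
      show "\<forall>x. j - 1 < x \<longrightarrow> x < j + 1 \<longrightarrow> {x, Suc x} \<notin> B"
        using j_free by (auto simp: less_Suc_eq)
      show "\<not> blocked (D - 1 + int (j + 1 - (j - 1)) - 1) (j + 1)"
        using below[of "j + 1"] \<open>j + 2 \<le> k\<close> order by (simp add: of_nat_diff)
    qed (use order assms(3) below[of j] in auto)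
    then have "on_chain (Suc i + (k - j - 2)) (j + 1 + (k - j - 2))"
    proof (rule on_chain_zigzag)
      show "int (j + 1) - int (Suc i) = D"
        using assms(2) order by (simp add: of_nat_diff)
    qed (use assms(3) order \<open>j + 2 \<le> k\<close> below above in auto)
    then have past_k: "on_chain (Suc (Suc i + (k - j - 2))) (k + 1)"
    proof (rule on_chain_detour)
      show "int (j + 1 + (k - j - 2)) - int (Suc i + (k - j - 2)) = D"
        using assms(2) order by (simp add: of_nat_diff)
      show "\<forall>x. j + 1 + (k - j - 2) < x \<longrightarrow> x < k + 1 \<longrightarrow> {x, Suc x} \<notin> B"
        using k_free \<open>j + 2 \<le> k\<close> by (auto simp: less_Suc_eq)
    qed (use assms(3) order \<open>j + 2 \<le> k\<close> above in \<open>auto simp: ac_simps\<close>)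
    have idx: "Suc (Suc i + (k - j - 2)) = i + (k - j)"
      using \<open>j + 2 \<le> k\<close> by simp
    from past_k show ?thesis
      unfolding idx .
  qed
qed

text \<open>Run along the chain to \<open>c0 = \<alpha> + 1 - D\<close>, zigzag with offsets D - 1 and D up to j, pass the
  free edges, zigzag with offsets D + 1 and D + 2 from \<open>k + 1\<close> to \<beta>, and run to the end of the chain.\<close>

lemma good_offset_impossible:
  assumes "good_offset D"
  shows False
proof -
  have D: "int \<beta> + 1 - int L \<le> D" "D \<le> int \<alpha>"
    and free: "free_below (D - 1) j" "free_below D k" "free_above (D + 1) (j + 2)" "free_above (D + 2) (k + 2)"
    using assms unfolding good_offset_def by auto
  define c0 where "c0 = nat (int \<alpha> + 1 - D)"
  define i1 where "i1 = c0 + (j - 1 - \<alpha>)"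
  define i2 where "i2 = i1 + (k - j)"
  have c0: "int c0 = int \<alpha> + 1 - D" "c0 + \<beta> \<le> L + \<alpha>"
    using D unfolding c0_def by auto
  have "on_chain c0 \<alpha>"
    using on_chain_run[OF on_chain_start, of c0] c0 order by simp
  then have "on_chain i1 (\<alpha> + (j - 1 - \<alpha>))"
    unfolding i1_def
  proof (rule on_chain_zigzag)
    show "int \<alpha> - int c0 = D - 1"
      using c0 by simp
  qed (use free c0 order in \<open>auto simp: free_below_def\<close>)
  then have "on_chain i2 (k + 1)"
    unfolding i2_def
  proof (intro on_chain_past_free_edges)
    show "int (j - 1) - int i1 = D - 1"
      unfolding i1_def using c0 order by (simp add: of_nat_diff)
  qed (use free c0 order in \<open>auto simp: i1_def\<close>)
  then have "on_chain (i2 + (\<beta> - (k + 1))) (k + 1 + (\<beta> - (k + 1)))"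
  proof (rule on_chain_zigzag)
    show "int (k + 1) - int i2 = D + 1"
      unfolding i2_def i1_def using c0 order by (simp add: of_nat_diff)
  qed (use free c0 order in \<open>auto simp: i2_def i1_def free_above_def ac_simps\<close>)
  moreover have "k + 1 + (\<beta> - (k + 1)) = \<beta>"
    using order by simp
  ultimately have "on_chain (i2 + (\<beta> - (k + 1))) \<beta>"
    by simp
  moreover have "i2 + (\<beta> - (k + 1)) \<le> L - 1"
    using c0 order unfolding i2_def i1_def by linarith
  ultimately have "on_chain (L - 1) \<beta>"
    using on_chain_run L_facts by simp
  then show False
    using arc_path_everything_impossible unfolding on_chain_def by blast
qed

theorem two_free_edges_impossible: False
  using exists_good_offset good_offset_impossible by blast

end

theorem proposition3:
  fixes m :: nat and B :: "nat set set" and \<alpha> \<delta> :: nat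
  assumes m2: "m \<ge> 2"
    and blk: "is_SHP_blocker (2*m - 1) B"
    and dirs_in: "\<forall>e\<in>B. \<exists>i<m. edge_dir (2*m - 1) e = edge_dir (2*m - 1) {i, i+1}"
    and one_per_dir: "\<forall>i<m. \<exists>!e. e \<in> B \<and> edge_dir (2*m - 1) e = edge_dir (2*m - 1) {i, i+1}"
    and first: "\<alpha> < m" "{\<alpha>, \<alpha>+1} \<in> B" "\<forall>i<\<alpha>. {i, i+1} \<notin> B"
    and last: "\<delta> < m" "{m-\<delta>-1, m-\<delta>} \<in> B" "\<forall>i. m-\<delta>-1 < i \<and> i < m \<longrightarrow> {i, i+1} \<notin> B"
  shows "card {i. \<alpha> \<le> i \<and> i < m-\<delta> \<and> {i, i+1} \<notin> B} \<le> 1"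
proof (rule ccontr)
  let ?S = "{i. \<alpha> \<le> i \<and> i < m-\<delta> \<and> {i, i+1} \<notin> B}"
  assume "\<not> card ?S \<le> 1"
  moreover have "finite ?S"
    by (rule finite_subset[of _ "{..<m}"]) auto
  ultimately have "\<not> (\<forall>x\<in>?S. \<forall>y\<in>?S. x = y)"
    using card_le_Suc0_iff_eq[of ?S] by simp
  then obtain x y where "x \<in> ?S" "y \<in> ?S" "x \<noteq> y"
    by blast
  then obtain j k where "j \<in> ?S" "k \<in> ?S" "j < k"
    by (cases "x < y") auto
  have "two_free_edges (2 * m - 1) m B \<alpha> (m - \<delta> - 1) j k"
  proof
    show "meets_all_SHP (2 * m - 1) B"
      using blk unfolding is_SHP_blocker_def by blast
    show "{m - \<delta> - 1, m - \<delta> - 1 + 1} \<in> B"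
      using last(1,2) by (simp add: Suc_diff_Suc)
    show "\<alpha> < j"
      using \<open>j \<in> ?S\<close> first(2) by (cases "j = \<alpha>") auto
    show "k < m - \<delta> - 1"
      using \<open>k \<in> ?S\<close> last(1,2) by (cases "k = m - \<delta> - 1") (auto simp: Suc_diff_Suc)
  qed (use dirs_in one_per_dir first last \<open>j \<in> ?S\<close> \<open>k \<in> ?S\<close> \<open>j < k\<close> in auto)
  then show False
    by (rule two_free_edges.two_free_edges_impossible)
qed

end
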